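(* Let $f\in F_0(G)$ and let $r\in\mathbb Z_+$ satisfy $r\ge \|f\|_1/(Md)$. Conditional on $f_0=f$, for every $n\in\mathbb Z_+$ and $t\ge 0$, $$\xi_n\succ\tilde\xi_n(Md,r),\qquad \tau_n=\sum_{k=1}^n\xi_k\succ\sum_{k=1}^n\tilde\xi_k(Md,r)=\tilde\tau_n(Md,r),\qquad \tilde\eta_t(Md,r)\succ\eta_t .$$
   Context: A graph is a quadruple $G=(V,E,K,m)$: $V$ is a finite or countable set of nodes, which are elements of a real Hilbert space $\mathcal H$ with inner product "$\cdot$" and norm $|\cdot|$; $E$ is a set of undirected edges (at most one edge between any two distinct nodes, no self-loops); the edge between $x$ and $y$ is written $\langle x,y\rangle=\langle y,x\rangle$, and $y\sim x$ means this edge exists; $K=(k_{xy})_{x,y\in V}$ with $k_{xy}=k_{yx}\ge0$ and $k_{xy}=0$ if there is no edge; $m=(m_x)_{x\in V}$ with $m_x>0$. Let $e_{xy}=(y-x)/|y-x|$. Assume $d_0=\sup_{x\in V}\#\{y:y\sim x\}<\infty$, set $d=\max\{d_0,2\}$, and assume $M=\max\{\sup_{x\in V}m_x^{-1},\sup_{\langle x,y\rangle\in E}k_{xy}\}<\infty$. $V=V_0\cup V_1$ is a fixed partition into disjoint sets. $F(G)$ is the set of functions $f$ assigning a real number $f(x)$ to each $x\in V$ and a vector $f(\langle x,y\rangle)\in\mathcal H$ that is a real multiple of $y-x$ to each edge. For $1\le\alpha<\infty$, $\|f\|_\alpha=\big(\sum_{x\in V}|f(x)|^\alpha/m_x+\sum_{\langle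 x,y\rangle\in E}k_{xy}|f(\langle x,y\rangle)|^\alpha\big)^{1/\alpha}$, and $\|f\|_\infty=\max\{\sup_x|f(x)|,\sup_{\langle x,y\rangle}|f(\langle x,y\rangle)|\}$. $F_0(G)$ is the set of $f\in F(G)$ with finitely many nonzero values such that $|f(x)|\in\mathbb Z$ and $|f(\langle x,y\rangle)|\in\mathbb Z$ for all nodes and edges. The interacting particle system (IPS) $(f_t)_{t\ge0}$ is the continuous-time Markov jump process on $F_0(G)$ with the following transitions from state $f$: (i) for each $x\in V$, at rate $|f(x)|/m_x$, for every $y\sim x$ the edge value $f(\langle x,y\rangle)$ is replaced by $f(\langle x,y\rangle)+\mathrm{sgn}(f(x))\,e_{yx}$ (all other values unchanged); (ii) for each edge $\langle x,y\rangle$, at rate $k_{xy}|f(\langle x,y\rangle)|$, with $s=\mathrm{sgn}(f(\langle x,y\rangle)\cdot e_{xy})$, the value $f(x)$ is replaced by $f(x)+s$ if $x\in V_0$ and $f(y)$ by $f(y)-s$ if $y\in V_0$ (values at nodes of $V_1$ never change; this rule is symmetric in $x,y$). $P_f,\mathbb E_f$ denote probability and expectation given $f_0=f$. $\tau_0=0$, $\tau_n$ is the time of the $n$-th jump, $\xi_n=\tau_n-\tau_{n-1}$, $h_n=f_{\tau_n}$, and $\eta_t=\sup\{n:\tau_n\le t\}$. For $[0,\infty)$-valued random variables, $X\succ Y$ means $P(X>t)\ge P(Y>t)$ for all $t\ge0$. The Yule process with parameters $\lambda>0$, $r\in\mathbb Z_+$ is the pure birth process started at $r$ that jumps from $n$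 to $n+1$ at rate $n\lambda$; $\tilde\tau_n(\lambda,r)$ is the time of its $n$-th jump ($\tilde\tau_0=0$), $\tilde\xi_n(\lambda,r)=\tilde\tau_n(\lambda,r)-\tilde\tau_{n-1}(\lambda,r)$ (so the $\tilde\xi_n$ are independent, $\tilde\xi_n(\lambda,r)$ exponential with rate $(n+r-1)\lambda$), and $\tilde\eta_t(\lambda,r)=\sup\{n:\tilde\tau_n(\lambda,r)\le t\}$. *)

theory Defs
  imports "HOL-Probability.Probability"
begin

text \<open>Configurations: a value at each node and a vector at each (unordered) edge.
  Edges are represented as two-element sets {x,y} of nodes.\<close>
type_synonym 'a cfg = "('a \<Rightarrow> real) \<times> ('a set \<Rightarrow> 'a)"

definition ue :: "'a::real_inner \<Rightarrow> 'a \<Rightarrow> 'a" where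
  "ue x y = (1 / norm (y - x)) *\<^sub>R (y - x)"

definition nbrs :: "'a set set \<Rightarrow> 'a \<Rightarrow> 'a set" where
  "nbrs E x = {y. {x, y} \<in> E}"

definition other :: "'a set \<Rightarrow> 'a \<Rightarrow> 'a" where
  "other e z = the_elem (e - {z})"

definition dd :: "'a set \<Rightarrow> 'a set set \<Rightarrow> nat" where
  "dd V E = max (Sup ((\<lambda>x. card (nbrs E x)) ` V)) 2"

definition MM :: "'a set \<Rightarrow> 'a set set \<Rightarrow> ('a set \<Rightarrow> real) \<Rightarrow> ('a \<Rightarrow> real) \<Rightarrow> real" where
  "MM V E k m = Sup ((\<lambda>x. 1 / m x) ` V \<union> k ` E)"

definition F0 :: "'a::real_inner set \<Rightarrow> 'a set set \<Rightarrow> 'a cfg set" where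
  "F0 V E = {g. (\<forall>x. x \<notin> V \<longrightarrow> fst g x = 0) \<and> (\<forall>e. e \<notin> E \<longrightarrow> snd g e = 0)
      \<and> finite {x. fst g x \<noteq> 0} \<and> finite {e. snd g e \<noteq> 0}
      \<and> (\<forall>x. \<bar>fst g x\<bar> \<in> \<int>)
      \<and> (\<forall>e\<in>E. norm (snd g e) \<in> \<int> \<and> (\<forall>x y. e = {x, y} \<longrightarrow> (\<exists>c::real. snd g e = c *\<^sub>R (y - x))))}"

definition norm1 :: "'a set \<Rightarrow> 'a set set \<Rightarrow> ('a set \<Rightarrow> real) \<Rightarrow> ('a \<Rightarrow> real) \<Rightarrow> 'a::real_normed_vector cfg \<Rightarrow> real" where
  "norm1 V E k m g = (\<Sum>x\<in>{x\<in>V. fst g x \<noteq> 0}. \<bar>fst g x\<bar> / m x)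
                   + (\<Sum>e\<in>{e\<in>E. snd g e \<noteq> 0}. k e * norm (snd g e))"

definition node_step :: "'a set set \<Rightarrow> 'a::real_inner cfg \<Rightarrow> 'a \<Rightarrow> 'a cfg" where
  "node_step E g x = (fst g, \<lambda>e. if e \<in> E \<and> x \<in> e
       then snd g e + sgn (fst g x) *\<^sub>R ue (other e x) x else snd g e)"

text \<open>Transition (ii): edge e = {x,y} fires; an endpoint z in V0 with other endpoint w
  gets sgn(f(e) . e_{zw}) added (this is +s at x and -s at y).\<close>
definition edge_step :: "'a set \<Rightarrow> 'a::real_inner cfg \<Rightarrow> 'a set \<Rightarrow> 'a cfg" where
  "edge_step V0 g e = (\<lambda>z. if z \<in> e \<and> z \<in> V0
       then fst g z + sgn (snd g e \<bullet> ue z (other e z)) else fst g z, snd g)"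

definition Qrate :: "'a set \<Rightarrow> 'a set set \<Rightarrow> ('a set \<Rightarrow> real) \<Rightarrow> ('a \<Rightarrow> real) \<Rightarrow> 'a set
    \<Rightarrow> 'a::real_inner cfg \<Rightarrow> 'a cfg \<Rightarrow> real" where
  "Qrate V E k m V0 g g' =
     (\<Sum>x\<in>{x\<in>V. fst g x \<noteq> 0 \<and> node_step E g x = g'}. \<bar>fst g x\<bar> / m x)
   + (\<Sum>e\<in>{e\<in>E. snd g e \<noteq> 0 \<and> edge_step V0 g e = g'}. k e * norm (snd g e))"

definition qrate :: "'a set \<Rightarrow> 'a set set \<Rightarrow> ('a set \<Rightarrow> real) \<Rightarrow> ('a \<Rightarrow> real) \<Rightarrow> 'a set
    \<Rightarrow> 'a::real_inner cfg \<Rightarrow> real" where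
  "qrate V E k m V0 g =
     (\<Sum>x\<in>{x\<in>V. fst g x \<noteq> 0 \<and> node_step E g x \<noteq> g}. \<bar>fst g x\<bar> / m x)
   + (\<Sum>e\<in>{e\<in>E. snd g e \<noteq> 0 \<and> edge_step V0 g e \<noteq> g}. k e * norm (snd g e))"

definition jprob :: "'a set \<Rightarrow> 'a set set \<Rightarrow> ('a set \<Rightarrow> real) \<Rightarrow> ('a \<Rightarrow> real) \<Rightarrow> 'a set
    \<Rightarrow> 'a::real_inner cfg \<Rightarrow> 'a cfg \<Rightarrow> real" where
  "jprob V E k m V0 g g' =
     (if qrate V E k m V0 g = 0 then (if g' = g then 1 else 0)
      else if g' = g then 0 else Qrate V E k m V0 g g' / qrate V E k m V0 g)"

text \<open>(H, X) is a realisation, started at f, of the IPS in jump-chain / holding-time form: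
  H n = h_n = f_{tau_n} (H 0 = f), X n = xi_n (n \<ge> 1), the holding time (\<infinity> after absorption).
  The finite-dimensional laws are those of the Markov jump process with rates Qrate.\<close>
definition IPS_realisation :: "'a set \<Rightarrow> 'a set set \<Rightarrow> ('a set \<Rightarrow> real) \<Rightarrow> ('a \<Rightarrow> real) \<Rightarrow> 'a set
    \<Rightarrow> 'a::real_inner cfg \<Rightarrow> 'w measure \<Rightarrow> (nat \<Rightarrow> 'w \<Rightarrow> 'a cfg) \<Rightarrow> (nat \<Rightarrow> 'w \<Rightarrow> ennreal) \<Rightarrow> bool" where
  "IPS_realisation V E k m V0 f P H X \<longleftrightarrow>
     prob_space P
   \<and> (\<forall>\<omega>\<in>space P. H 0 \<omega> = f)
   \<and> (\<forall>n g. {\<omega>\<in>space P. H n \<omega> = g} \<in> sets P)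
   \<and> (\<forall>n. X n \<in> borel_measurable P)
   \<and> (\<forall>n (g::nat \<Rightarrow> 'a cfg) (t::nat \<Rightarrow> real). g 0 = f \<longrightarrow> (\<forall>j\<in>{1..n}. 0 \<le> t j) \<longrightarrow>
        measure P {\<omega>\<in>space P. \<forall>j\<in>{1..n}. H j \<omega> = g j \<and> ennreal (t j) < X j \<omega>}
        = (\<Prod>j\<in>{1..n}. jprob V E k m V0 (g (j - 1)) (g j)
                          * exp (- qrate V E k m V0 (g (j - 1)) * t j)))"

text \<open>Y 1, Y 2, ... are the inter-jump times of a Yule process with parameters lam, r:
  independent, Y n exponential with rate (n + r - 1) lam (= \<infinity> a.s. if that rate is 0).\<close>
definition Yule_times :: "real \<Rightarrow> nat \<Rightarrow> 'v measure \<Rightarrow> (nat \<Rightarrow> 'v \<Rightarrow> ennreal) \<Rightarrow> bool" where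
  "Yule_times lam r N Y \<longleftrightarrow>
     prob_space N
   \<and> prob_space.indep_vars N (\<lambda>_. borel) Y {1..}
   \<and> (\<forall>n\<ge>1. \<forall>t::real. 0 \<le> t \<longrightarrow>
        measure N {\<omega>\<in>space N. ennreal t < Y n \<omega>} = exp (- (real (n + r - 1) * lam) * t))"

definition jtime :: "(nat \<Rightarrow> 'w \<Rightarrow> ennreal) \<Rightarrow> nat \<Rightarrow> 'w \<Rightarrow> ennreal" where
  "jtime X n \<omega> = (\<Sum>j\<in>{1..n}. X j \<omega>)"

definition jcount :: "(nat \<Rightarrow> 'w \<Rightarrow> ennreal) \<Rightarrow> real \<Rightarrow> 'w \<Rightarrow> ennreal" where
  "jcount X t \<omega> = Sup {of_nat n | n. jtime X n \<omega> \<le> ennreal t}"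

definition sdom :: "'w measure \<Rightarrow> ('w \<Rightarrow> ennreal) \<Rightarrow> 'v measure \<Rightarrow> ('v \<Rightarrow> ennreal) \<Rightarrow> bool" where
  "sdom P X N Y \<longleftrightarrow> (\<forall>t::real. 0 \<le> t \<longrightarrow>
      measure N {\<omega>\<in>space N. ennreal t < Y \<omega>} \<le> measure P {\<omega>\<in>space P. ennreal t < X \<omega>})"

end

theory Submission
  imports Defs
begin

text \<open>Along any path of the embedded jump chain every jump raises the norm by at most M d:
  a firing node changes at most d incident edges by a unit vector, a firing edge changes at
  most 2 \<le> d nodes by 1. The total jump rate is at most the norm, so before the j-th jump
  it is at most norm1 f + (j - 1) M d \<le> (r + j - 1) M d, the rate of the j-th Yule holding
  time. Conditionally on the path the IPS holding times are independent exponentials;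
  rescaling the Yule holding times by the ratio of the rates couples them below the IPS
  ones, so the Yule vector is dominated on every upward closed event, path by path and hence
  after summing over all paths. The events for the n-th holding time and the n-th jump time
  are upward closed, and the jump counts follow by complementation, since the count up to
  time t is at least K exactly when the K-th jump time is at most t.\<close>

section \<open>Upper orthants determine finite measures on ennreal vectors\<close>

lemma sets_borel_ennreal_eq_sigma_Ioi:
  "sets (borel :: ennreal measure) = sigma_sets UNIV (insert UNIV (range greaterThan))"
proof -
  have "sets (borel :: ennreal measure) = sigma_sets UNIV (range greaterThan)"
    by (subst borel_Ioi) simp
  also have "\<dots> = sigma_sets UNIV (insert UNIV (range greaterThan))"
    by (intro sigma_sets_eqI) (auto intro: sigma_sets.Basic sigma_sets_top)
  finally show ?thesis .
qed

lemma Int_stable_PiE_ennreal_Ioi: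
  "Int_stable ((\<lambda>A. Pi\<^sub>E I A) ` (I \<rightarrow> insert UNIV (range (greaterThan :: ennreal \<Rightarrow> _))))"
proof (rule Int_stableI_image)
  fix A B :: "_ \<Rightarrow> ennreal set"
  assume A: "A \<in> I \<rightarrow> insert UNIV (range greaterThan)"
    and B: "B \<in> I \<rightarrow> insert UNIV (range greaterThan)"
  have "A i \<inter> B i \<in> insert UNIV (range greaterThan)" if "i \<in> I" for i
  proof -
    have Ioi_Int: "{a<..} \<inter> {b<..} = {max a b<..}" for a b :: ennreal by auto
    from A B that have "A i \<in> insert UNIV (range greaterThan)" "B i \<in> insert UNIV (range greaterThan)"
      by auto
    then show ?thesis by (elim insertE imageE) (simp_all add: Ioi_Int)
  qed
  then show "\<exists>C\<in>I \<rightarrow> insert UNIV (range greaterThan). Pi\<^sub>E I A \<inter> Pi\<^sub>E I B = Pi\<^sub>E I C"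
    by (intro bexI[of _ "\<lambda>i. A i \<inter> B i"]) (auto simp: PiE_Int)
qed

lemma measure_eqI_PiM_ennreal_Ioi:
  fixes \<mu> \<nu> :: "('i \<Rightarrow> ennreal) measure"
  assumes I: "finite I"
    and sets: "sets \<mu> = sets (PiM I (\<lambda>_. borel))" "sets \<nu> = sets (PiM I (\<lambda>_. borel))"
    and fin: "emeasure \<mu> (space (PiM I (\<lambda>_. borel))) \<noteq> \<infinity>"
    and eq: "\<And>A. A \<in> I \<rightarrow> insert UNIV (range greaterThan) \<Longrightarrow> emeasure \<mu> (Pi\<^sub>E I A) = emeasure \<nu> (Pi\<^sub>E I A)"
  shows "\<mu> = \<nu>"
proof -
  define G where "G = insert UNIV (range (greaterThan :: ennreal \<Rightarrow> _))"
  define \<Omega> where "\<Omega> = space (PiM I (\<lambda>_. borel :: ennreal measure))"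
  define R where "R = (\<lambda>A. Pi\<^sub>E I A) ` (I \<rightarrow> G)"
  have \<Omega>: "\<Omega> = Pi\<^sub>E I (\<lambda>_. UNIV)" by (simp add: \<Omega>_def space_PiM)
  have "sets (PiM I (\<lambda>_. borel :: ennreal measure)) = sets (PiM I (\<lambda>_. sigma UNIV G))"
    by (intro sets_PiM_cong) (simp_all add: G_def sets_borel_ennreal_eq_sigma_Ioi)
  also have "\<dots> = sets (sigma (Pi\<^sub>E I (\<lambda>_. UNIV))
      {{f\<in>Pi\<^sub>E I (\<lambda>_. UNIV). \<forall>i\<in>j. f i \<in> A i} | A j. j \<in> {I} \<and> A \<in> Pi j (\<lambda>_. G)})"
    by (rule sets_PiM_sigma) (auto simp: I G_def intro!: exI[of _ "{UNIV}"])
  also have "{{f\<in>Pi\<^sub>E I (\<lambda>_. UNIV). \<forall>i\<in>j. f i \<in> A i} | A j. j \<in> {I} \<and> A \<in> Pi j (\<lambda>_. G)} = R"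
    by (auto simp: R_def PiE_def Pi_def)
  also have "sets (sigma (Pi\<^sub>E I (\<lambda>_. UNIV)) R) = sigma_sets \<Omega> R"
    by (subst sets_measure_of) (auto simp: \<Omega> R_def)
  finally have sets_R: "sets (PiM I (\<lambda>_. borel)) = sigma_sets \<Omega> R" .
  have UNIV_R: "\<Omega> \<in> R" unfolding \<Omega> R_def G_def by blast
  show ?thesis
  proof (rule measure_eqI_generator_eq[where E=R and \<Omega>=\<Omega> and A="\<lambda>_. \<Omega>"])
    show "Int_stable R" unfolding R_def G_def by (rule Int_stable_PiE_ennreal_Ioi)
    show "R \<subseteq> Pow \<Omega>" by (auto simp: R_def \<Omega>)
    show "emeasure \<mu> X = emeasure \<nu> X" if "X \<in> R" for X using that eq by (auto simp: R_def G_def)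
  qed (use sets sets_R UNIV_R fin in \<open>auto simp: \<Omega>_def\<close>)
qed

section \<open>Exponential tails and their coupling\<close>

lemma pos_mem_Ioi_gen_iff:
  assumes "A \<in> insert UNIV (range greaterThan)"
  shows "(0 < x \<and> x \<in> A) \<longleftrightarrow> Inf A < (x :: ennreal)"
  using assms by (auto simp: bot_ennreal intro: le_less_trans[OF zero_le])

text \<open>The probability that an exponential variable of rate q exceeds b.\<close>
definition exp_tail :: "real \<Rightarrow> ennreal \<Rightarrow> real" where
  "exp_tail q b = (if b = \<infinity> then 0 else exp (- q * enn2real b))"

lemma exp_tail_nonneg [simp]: "0 \<le> exp_tail q b"
  by (simp add: exp_tail_def)

lemma ennreal_less_mult_iff:
  fixes c t :: real and y :: ennreal
  assumes "0 < c" "0 \<le> t"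
  shows "ennreal t < ennreal c * y \<longleftrightarrow> ennreal (t / c) < y"
proof (cases y)
  case (real y')
  then show ?thesis using assms
    by (simp add: ennreal_mult[symmetric] ennreal_less_iff pos_divide_less_eq mult.commute)
next
  case top
  then show ?thesis using assms by (simp add: ennreal_mult_top)
qed

lemma measure_tail_scaled:
  fixes Y :: "'v \<Rightarrow> ennreal"
  assumes q: "0 < q" "q \<le> l" and t: "0 \<le> t"
    and tail: "\<And>s. 0 \<le> s \<Longrightarrow> measure N {\<omega>\<in>space N. ennreal s < Y \<omega>} = exp (- l * s)"
  shows "measure N {\<omega>\<in>space N. ennreal t < ennreal (l / q) * Y \<omega>} = exp (- q * t)"
proof -
  have lq: "0 < l / q" using q by simp
  have "{\<omega>\<in>space N. ennreal t < ennreal (l / q) * Y \<omega>} = {\<omega>\<in>space N. ennreal (t / (l / q)) < Y \<omega>}"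
    using ennreal_less_mult_iff[OF lq t] by simp
  also have "measure N \<dots> = exp (- l * (t / (l / q)))"
    using t lq by (intro tail divide_nonneg_pos)
  also have "\<dots> = exp (- q * t)" using q by (simp add: field_simps)
  finally show ?thesis .
qed

lemma measure_joint_tail_ennreal:
  fixes X :: "'i \<Rightarrow> 'w \<Rightarrow> ennreal" and b :: "'i \<Rightarrow> ennreal"
  assumes I: "finite I"
    and tail: "\<And>t. (\<forall>j\<in>I. 0 \<le> t j) \<Longrightarrow>
      measure P {\<omega>\<in>space P. Q \<omega> \<and> (\<forall>j\<in>I. ennreal (t j) < X j \<omega>)} = c * (\<Prod>j\<in>I. exp (- q j * t j))"
  shows "measure P {\<omega>\<in>space P. Q \<omega> \<and> (\<forall>j\<in>I. b j < X j \<omega>)} = c * (\<Prod>j\<in>I. exp_tail (q j) (b j))"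
proof (cases "\<exists>j\<in>I. b j = \<infinity>")
  case True
  then have "(\<Prod>j\<in>I. exp_tail (q j) (b j)) = 0" using I by (auto simp: exp_tail_def)
  moreover have "{\<omega>\<in>space P. Q \<omega> \<and> (\<forall>j\<in>I. b j < X j \<omega>)} = {}"
    using True by (force simp: top.extremum_strict)
  ultimately show ?thesis by (metis measure_empty mult_zero_right)
next
  case False
  then have "b j = ennreal (enn2real (b j))" if "j \<in> I" for j using that by (simp add: less_top)
  then have "{\<omega>\<in>space P. Q \<omega> \<and> (\<forall>j\<in>I. b j < X j \<omega>)}
      = {\<omega>\<in>space P. Q \<omega> \<and> (\<forall>j\<in>I. ennreal (enn2real (b j)) < X j \<omega>)}"
    by (metis (no_types, lifting))
  with False show ?thesis by (simp add: tail exp_tail_def)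
qed

lemma measure_Ioi_gen_of_exp_tail:
  fixes Z :: "'v \<Rightarrow> ennreal"
  assumes N: "prob_space N" and A: "A \<in> insert UNIV (range greaterThan)"
    and tail: "\<And>t. 0 \<le> t \<Longrightarrow> measure N {\<omega>\<in>space N. ennreal t < Z \<omega>} = exp (- q * t)"
  shows "measure N (Z -` A \<inter> space N) = exp_tail q (Inf A)"
proof -
  interpret prob_space N by fact
  from A consider "A = UNIV" | b where "A = {b<..}" by auto
  then show ?thesis
  proof cases
    case 1
    then show ?thesis by (simp add: prob_space bot_ennreal exp_tail_def)
  next
    case (2 b)
    show ?thesis
    proof (cases "b = \<infinity>")
      case False
      then have "Z -` A \<inter> space N = {\<omega>\<in>space N. ennreal (enn2real b) < Z \<omega>}"
        using 2 by (auto simp: less_top)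
      with 2 False show ?thesis by (simp add: tail exp_tail_def)
    qed (simp add: 2 exp_tail_def greaterThan_def top.extremum_strict)
  qed
qed

lemma measure_PiE_Ioi_gen_indep:
  fixes Z :: "'i \<Rightarrow> 'v \<Rightarrow> ennreal"
  assumes N: "prob_space N" and I: "finite I" "I \<noteq> {}"
    and indep: "prob_space.indep_vars N (\<lambda>_. borel) Z I"
    and tail: "\<And>j t. j \<in> I \<Longrightarrow> 0 \<le> t \<Longrightarrow> measure N {\<omega>\<in>space N. ennreal t < Z j \<omega>} = exp (- q j * t)"
    and A: "A \<in> I \<rightarrow> insert UNIV (range greaterThan)"
  shows "measure N {\<omega>\<in>space N. (\<lambda>j\<in>I. Z j \<omega>) \<in> Pi\<^sub>E I A} = (\<Prod>j\<in>I. exp_tail (q j) (Inf (A j)))"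
proof -
  interpret prob_space N by fact
  have "{\<omega>\<in>space N. (\<lambda>j\<in>I. Z j \<omega>) \<in> Pi\<^sub>E I A} = (\<Inter>j\<in>I. Z j -` A j \<inter> space N)"
    using I by auto
  also have "prob \<dots> = (\<Prod>j\<in>I. prob (Z j -` A j \<inter> space N))"
  proof (intro indep_varsD[OF indep] I)
    show "A j \<in> sets borel" if "j \<in> I" for j
      using A that by (auto simp: Pi_iff)
  qed simp
  also have "\<dots> = (\<Prod>j\<in>I. exp_tail (q j) (Inf (A j)))"
    using A by (intro prod.cong refl measure_Ioi_gen_of_exp_tail[OF N] tail) auto
  finally show ?thesis .
qed

lemma measure_PiE_Ioi_gen_joint_tail:
  fixes X :: "'i \<Rightarrow> 'w \<Rightarrow> ennreal"
  assumes I: "finite I"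
    and tail: "\<And>t. (\<forall>j\<in>I. 0 \<le> t j) \<Longrightarrow>
      measure P {\<omega>\<in>space P. Q \<omega> \<and> (\<forall>j\<in>I. ennreal (t j) < X j \<omega>)} = c * (\<Prod>j\<in>I. exp (- q j * t j))"
    and A: "A \<in> I \<rightarrow> insert UNIV (range greaterThan)"
  shows "measure P {\<omega>\<in>space P. (Q \<omega> \<and> (\<forall>j\<in>I. 0 < X j \<omega>)) \<and> (\<lambda>j\<in>I. X j \<omega>) \<in> Pi\<^sub>E I A}
    = c * (\<Prod>j\<in>I. exp_tail (q j) (Inf (A j)))"
proof -
  have "{\<omega>\<in>space P. (Q \<omega> \<and> (\<forall>j\<in>I. 0 < X j \<omega>)) \<and> (\<lambda>j\<in>I. X j \<omega>) \<in> Pi\<^sub>E I A}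
      = {\<omega>\<in>space P. Q \<omega> \<and> (\<forall>j\<in>I. Inf (A j) < X j \<omega>)}"
  proof -
    have "(0 < X j \<omega> \<and> X j \<omega> \<in> A j) \<longleftrightarrow> Inf (A j) < X j \<omega>" if "j \<in> I" for j \<omega>
      using A that by (intro pos_mem_Ioi_gen_iff) auto
    then show ?thesis by (auto simp: PiE_iff)
  qed
  then show ?thesis using measure_joint_tail_ennreal[OF I tail] by simp
qed

lemma indep_exp_tails_coupling:
  fixes Y :: "'i \<Rightarrow> 'v \<Rightarrow> ennreal"
  assumes N: "prob_space N"
    and q: "\<And>j. j \<in> I \<Longrightarrow> 0 \<le> q j \<and> q j \<le> l j"
    and indep: "prob_space.indep_vars N (\<lambda>_. borel) Y I"
    and tail_Y: "\<And>j t. j \<in> I \<Longrightarrow> 0 \<le> t \<Longrightarrow> measure N {\<omega>\<in>space N. ennreal t < Y j \<omega>} = exp (- l j * t)"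
  obtains Z where "prob_space.indep_vars N (\<lambda>_. borel) Z I"
    and "\<And>j t. j \<in> I \<Longrightarrow> 0 \<le> t \<Longrightarrow> measure N {\<omega>\<in>space N. ennreal t < Z j \<omega>} = exp (- q j * t)"
    and "\<And>j \<omega>. j \<in> I \<Longrightarrow> Y j \<omega> \<le> Z j \<omega>"
proof -
  interpret prob_space N by fact
  \<comment> \<open>Multiplying a variable of rate l by l / q \<ge> 1 yields one of rate q.\<close>
  define scale where "scale j y = (if q j = 0 then \<infinity> else ennreal (l j / q j) * y)" for j y
  have scale_meas: "scale j \<in> borel_measurable borel" for j
    unfolding scale_def by measurable
  show ?thesis
  proof
    show "indep_vars (\<lambda>_. borel) (\<lambda>j \<omega>. scale j (Y j \<omega>)) I"
      by (rule indep_vars_compose2[OF indep scale_meas])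
    show "prob {\<omega>\<in>space N. ennreal t < scale j (Y j \<omega>)} = exp (- q j * t)"
      if "j \<in> I" "0 \<le> t" for j t
      using q[of j] that measure_tail_scaled[of "q j" "l j" t N "Y j"] tail_Y
      by (cases "q j = 0") (auto simp: scale_def prob_space)
    show "Y j \<omega> \<le> scale j (Y j \<omega>)" if "j \<in> I" for j \<omega>
    proof (cases "q j = 0")
      case False
      with q[OF that] have "1 \<le> ennreal (l j / q j)"
        by (simp add: ennreal_1[symmetric] del: ennreal_1)
      then show ?thesis using False mult_right_mono[of 1 _ "Y j \<omega>"] by (simp add: scale_def)
    qed (simp add: scale_def)
  qed
qed

lemma measure_joint_tail_eq_indep:
  fixes X :: "'i \<Rightarrow> 'w \<Rightarrow> ennreal" and Z :: "'i \<Rightarrow> 'v \<Rightarrow> ennreal"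
  assumes P: "prob_space P" and N: "prob_space N" and I: "finite I" "I \<noteq> {}"
    and X_meas: "\<And>j. j \<in> I \<Longrightarrow> X j \<in> borel_measurable P"
    and Q_meas: "{\<omega>\<in>space P. Q \<omega>} \<in> sets P"
    and tail_X: "\<And>t. (\<forall>j\<in>I. 0 \<le> t j) \<Longrightarrow>
      measure P {\<omega>\<in>space P. Q \<omega> \<and> (\<forall>j\<in>I. ennreal (t j) < X j \<omega>)} = c * (\<Prod>j\<in>I. exp (- q j * t j))"
    and c: "0 \<le> c"
    and indep: "prob_space.indep_vars N (\<lambda>_. borel) Z I"
    and tail_Z: "\<And>j t. j \<in> I \<Longrightarrow> 0 \<le> t \<Longrightarrow> measure N {\<omega>\<in>space N. ennreal t < Z j \<omega>} = exp (- q j * t)"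
    and S: "S \<in> sets (PiM I (\<lambda>_. borel))"
  shows "c * measure N {\<omega>\<in>space N. (\<lambda>j\<in>I. Z j \<omega>) \<in> S}
    = measure P {\<omega>\<in>space P. (Q \<omega> \<and> (\<forall>j\<in>I. 0 < X j \<omega>)) \<and> (\<lambda>j\<in>I. X j \<omega>) \<in> S}"
proof -
  interpret P: prob_space P by fact
  interpret N: prob_space N by fact
  define M where "M = PiM I (\<lambda>_. borel :: ennreal measure)"
  \<comment> \<open>At t = 0 the tail formula only sees the event X > 0, so only the law of X
    restricted to that event can agree with the exponential law.\<close>
  define B where "B = {\<omega>\<in>space P. Q \<omega> \<and> (\<forall>j\<in>I. 0 < X j \<omega>)}"
  define \<mu> where "\<mu> = distr (density P (indicator B)) M (\<lambda>\<omega>. \<lambda>j\<in>I. X j \<omega>)"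
  define \<nu> where "\<nu> = density (distr N M (\<lambda>\<omega>. \<lambda>j\<in>I. Z j \<omega>)) (\<lambda>_. ennreal c)"
  have Xv_meas: "(\<lambda>\<omega>. \<lambda>j\<in>I. X j \<omega>) \<in> measurable P M"
    unfolding M_def by (intro measurable_restrict X_meas)
  have Zv_meas: "(\<lambda>\<omega>. \<lambda>j\<in>I. Z j \<omega>) \<in> measurable N M"
    unfolding M_def using indep by (intro measurable_restrict) (auto simp: N.indep_vars_def)
  have B_meas: "B \<in> sets P"
    unfolding B_def using X_meas Q_meas I by measurable
  have \<mu>_eq: "emeasure \<mu> R = emeasure P {\<omega>\<in>space P. (Q \<omega> \<and> (\<forall>j\<in>I. 0 < X j \<omega>)) \<and> (\<lambda>j\<in>I. X j \<omega>) \<in> R}"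
    if "R \<in> sets M" for R
  proof -
    have "emeasure \<mu> R = emeasure (density P (indicator B)) ((\<lambda>\<omega>. \<lambda>j\<in>I. X j \<omega>) -` R \<inter> space P)"
      unfolding \<mu>_def using that Xv_meas by (subst emeasure_distr) simp_all
    also have "\<dots> = emeasure P (B \<inter> ((\<lambda>\<omega>. \<lambda>j\<in>I. X j \<omega>) -` R \<inter> space P))"
      using measurable_sets[OF Xv_meas that] B_meas
      by (simp add: emeasure_density indicator_inter_arith[symmetric] nn_integral_indicator)
    also have "B \<inter> ((\<lambda>\<omega>. \<lambda>j\<in>I. X j \<omega>) -` R \<inter> space P)
        = {\<omega>\<in>space P. (Q \<omega> \<and> (\<forall>j\<in>I. 0 < X j \<omega>)) \<and> (\<lambda>j\<in>I. X j \<omega>) \<in> R}"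
      by (auto simp: B_def)
    finally show ?thesis .
  qed
  have \<nu>_eq: "emeasure \<nu> R = ennreal c * emeasure N {\<omega>\<in>space N. (\<lambda>j\<in>I. Z j \<omega>) \<in> R}"
    if "R \<in> sets M" for R
    using that Zv_meas unfolding \<nu>_def
    by (simp add: emeasure_density_const emeasure_distr vimage_def Int_def conj_commute)
  have "\<mu> = \<nu>"
  proof (rule measure_eqI_PiM_ennreal_Ioi[OF I(1)])
    show "sets \<mu> = sets (PiM I (\<lambda>_. borel))" "sets \<nu> = sets (PiM I (\<lambda>_. borel))"
      by (simp_all add: \<mu>_def \<nu>_def M_def)
    show "emeasure \<mu> (space (PiM I (\<lambda>_. borel))) \<noteq> \<infinity>"
      using \<mu>_eq[of "space M"] by (simp add: M_def P.emeasure_eq_measure)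
  next
    fix A :: "'i \<Rightarrow> ennreal set" assume A: "A \<in> I \<rightarrow> insert UNIV (range greaterThan)"
    have "Pi\<^sub>E I A \<in> sets M"
      using A unfolding M_def by (intro sets_PiM_I_finite I) (auto simp: Pi_iff)
    then show "emeasure \<mu> (Pi\<^sub>E I A) = emeasure \<nu> (Pi\<^sub>E I A)"
      using measure_PiE_Ioi_gen_joint_tail[OF I(1) tail_X A]
        measure_PiE_Ioi_gen_indep[OF N I indep tail_Z A] c
      by (simp add: \<mu>_eq \<nu>_eq P.emeasure_eq_measure N.emeasure_eq_measure ennreal_mult[symmetric] prod_nonneg)
  qed
  then have "ennreal c * emeasure N {\<omega>\<in>space N. (\<lambda>j\<in>I. Z j \<omega>) \<in> S}
      = emeasure P {\<omega>\<in>space P. (Q \<omega> \<and> (\<forall>j\<in>I. 0 < X j \<omega>)) \<and> (\<lambda>j\<in>I. X j \<omega>) \<in> S}"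
    using S \<mu>_eq \<nu>_eq by (simp add: M_def)
  then show ?thesis
    using c by (simp add: P.emeasure_eq_measure N.emeasure_eq_measure ennreal_mult[symmetric])
qed

lemma measure_upper_set_le_of_exp_tails:
  fixes X :: "'i \<Rightarrow> 'w \<Rightarrow> ennreal" and Y :: "'i \<Rightarrow> 'v \<Rightarrow> ennreal"
    and S :: "('i \<Rightarrow> ennreal) set"
  assumes P: "prob_space P" and N: "prob_space N" and I: "finite I" "I \<noteq> {}"
    and X_meas: "\<And>j. j \<in> I \<Longrightarrow> X j \<in> borel_measurable P"
    and Q_meas: "{\<omega>\<in>space P. Q \<omega>} \<in> sets P"
    and tail_X: "\<And>t. (\<forall>j\<in>I. 0 \<le> t j) \<Longrightarrow>
      measure P {\<omega>\<in>space P. Q \<omega> \<and> (\<forall>j\<in>I. ennreal (t j) < X j \<omega>)} = c * (\<Prod>j\<in>I. exp (- q j * t j))"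
    and c: "0 \<le> c"
    and q: "\<And>j. j \<in> I \<Longrightarrow> 0 \<le> q j \<and> q j \<le> l j"
    and indep: "prob_space.indep_vars N (\<lambda>_. borel) Y I"
    and tail_Y: "\<And>j t. j \<in> I \<Longrightarrow> 0 \<le> t \<Longrightarrow> measure N {\<omega>\<in>space N. ennreal t < Y j \<omega>} = exp (- l j * t)"
    and S: "S \<in> sets (PiM I (\<lambda>_. borel))"
    and S_up: "\<And>x y. x \<in> S \<Longrightarrow> y \<in> space (PiM I (\<lambda>_. borel)) \<Longrightarrow> (\<forall>j\<in>I. x j \<le> y j) \<Longrightarrow> y \<in> S"
  shows "c * measure N {\<omega>\<in>space N. (\<lambda>j\<in>I. Y j \<omega>) \<in> S} \<le> measure P {\<omega>\<in>space P. Q \<omega> \<and> (\<lambda>j\<in>I. X j \<omega>) \<in> S}"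
proof -
  interpret P: prob_space P by fact
  interpret N: prob_space N by fact
  obtain Z where indep_Z: "N.indep_vars (\<lambda>_. borel) Z I"
    and tail_Z: "\<And>j t. j \<in> I \<Longrightarrow> 0 \<le> t \<Longrightarrow> N.prob {\<omega>\<in>space N. ennreal t < Z j \<omega>} = exp (- q j * t)"
    and Y_le_Z: "\<And>j \<omega>. j \<in> I \<Longrightarrow> Y j \<omega> \<le> Z j \<omega>"
    using indep_exp_tails_coupling[OF N q indep tail_Y] by blast
  have Zv_meas: "(\<lambda>\<omega>. \<lambda>j\<in>I. Z j \<omega>) \<in> measurable N (PiM I (\<lambda>_. borel))"
    using indep_Z by (intro measurable_restrict) (auto simp: N.indep_vars_def)
  have Xv_meas: "(\<lambda>\<omega>. \<lambda>j\<in>I. X j \<omega>) \<in> measurable P (PiM I (\<lambda>_. borel))"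
    by (intro measurable_restrict X_meas)
  have "N.prob {\<omega>\<in>space N. (\<lambda>j\<in>I. Y j \<omega>) \<in> S} \<le> N.prob {\<omega>\<in>space N. (\<lambda>j\<in>I. Z j \<omega>) \<in> S}"
  proof (rule N.finite_measure_mono)
    show "{\<omega>\<in>space N. (\<lambda>j\<in>I. Y j \<omega>) \<in> S} \<subseteq> {\<omega>\<in>space N. (\<lambda>j\<in>I. Z j \<omega>) \<in> S}"
      using S_up Y_le_Z by (auto simp: space_PiM)
    have "{\<omega>\<in>space N. (\<lambda>j\<in>I. Z j \<omega>) \<in> S} = (\<lambda>\<omega>. \<lambda>j\<in>I. Z j \<omega>) -` S \<inter> space N" by auto
    then show "{\<omega>\<in>space N. (\<lambda>j\<in>I. Z j \<omega>) \<in> S} \<in> sets N"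
      using measurable_sets[OF Zv_meas S] by simp
  qed
  then have "c * N.prob {\<omega>\<in>space N. (\<lambda>j\<in>I. Y j \<omega>) \<in> S}
      \<le> c * N.prob {\<omega>\<in>space N. (\<lambda>j\<in>I. Z j \<omega>) \<in> S}"
    using c by (rule mult_left_mono)
  also have "\<dots> = P.prob {\<omega>\<in>space P. (Q \<omega> \<and> (\<forall>j\<in>I. 0 < X j \<omega>)) \<and> (\<lambda>j\<in>I. X j \<omega>) \<in> S}"
    by (rule measure_joint_tail_eq_indep[OF P N I X_meas Q_meas tail_X c indep_Z tail_Z S])
  also have "\<dots> \<le> P.prob {\<omega>\<in>space P. Q \<omega> \<and> (\<lambda>j\<in>I. X j \<omega>) \<in> S}"
  proof -
    have "{\<omega>\<in>space P. Q \<omega> \<and> (\<lambda>j\<in>I. X j \<omega>) \<in> S}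
        = {\<omega>\<in>space P. Q \<omega>} \<inter> ((\<lambda>\<omega>. \<lambda>j\<in>I. X j \<omega>) -` S \<inter> space P)" by auto
    then have "{\<omega>\<in>space P. Q \<omega> \<and> (\<lambda>j\<in>I. X j \<omega>) \<in> S} \<in> sets P"
      using Q_meas measurable_sets[OF Xv_meas S] by auto
    then show ?thesis by (intro P.finite_measure_mono) auto
  qed
  finally show ?thesis .
qed

section \<open>Jump times and jump counts\<close>

lemma jtime_mono: "a \<le> b \<Longrightarrow> jtime Z a \<omega> \<le> jtime Z b \<omega>"
  unfolding jtime_def by (intro sum_mono2) auto

lemma less_jcount_iff:
  assumes s: "0 \<le> s"
  shows "ennreal s < jcount Z t \<omega> \<longleftrightarrow> jtime Z (nat \<lfloor>s\<rfloor> + 1) \<omega> \<le> ennreal t"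
proof -
  define K where "K = nat \<lfloor>s\<rfloor> + 1"
  have less_K: "ennreal s < of_nat j \<longleftrightarrow> K \<le> j" for j
  proof -
    have "ennreal s < of_nat j \<longleftrightarrow> s < real j"
      using s by (simp add: ennreal_of_nat_eq_real_of_nat ennreal_less_iff)
    also have "\<dots> \<longleftrightarrow> \<lfloor>s\<rfloor> < int j" by (metis floor_less_iff of_int_of_nat_eq)
    also have "\<dots> \<longleftrightarrow> K \<le> j"
      using s by (simp add: K_def nat_less_iff[symmetric] Suc_le_eq)
    finally show ?thesis .
  qed
  have "ennreal s < jcount Z t \<omega> \<longleftrightarrow> (\<exists>j. jtime Z j \<omega> \<le> ennreal t \<and> K \<le> j)"
    unfolding jcount_def less_Sup_iff using less_K by auto
  also have "\<dots> \<longleftrightarrow> jtime Z K \<omega> \<le> ennreal t"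
    using jtime_mono[of K _ Z \<omega>] order_trans by blast
  finally show ?thesis unfolding K_def .
qed

lemma sdom_jcount_of_sdom_jtime:
  assumes P: "prob_space P" and N: "prob_space N"
    and X_meas: "\<And>n. jtime X n \<in> borel_measurable P" and Y_meas: "\<And>n. jtime Y n \<in> borel_measurable N"
    and dom: "\<And>n. sdom P (jtime X n) N (jtime Y n)"
    and t: "0 \<le> t"
  shows "sdom N (jcount Y t) P (jcount X t)"
  unfolding sdom_def
proof (intro allI impI)
  interpret P: prob_space P by fact
  interpret N: prob_space N by fact
  fix s :: real assume s: "0 \<le> s"
  define K where "K = nat \<lfloor>s\<rfloor> + 1"
  have compl: "{\<omega>\<in>space M. ennreal s < jcount Z t \<omega>} = space M - {\<omega>\<in>space M. ennreal t < jtime Z K \<omega>}"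
    for M :: "'c measure" and Z
    by (auto simp: K_def not_less less_jcount_iff[OF s])
  have "{\<omega>\<in>space P. ennreal t < jtime X K \<omega>} \<in> sets P" "{\<omega>\<in>space N. ennreal t < jtime Y K \<omega>} \<in> sets N"
    using X_meas Y_meas by measurable
  moreover have "N.prob {\<omega>\<in>space N. ennreal t < jtime Y K \<omega>} \<le> P.prob {\<omega>\<in>space P. ennreal t < jtime X K \<omega>}"
    using dom[of K] t by (simp add: sdom_def)
  ultimately show "P.prob {\<omega>\<in>space P. ennreal s < jcount X t \<omega>} \<le> N.prob {\<omega>\<in>space N. ennreal s < jcount Y t \<omega>}"
    by (simp add: compl P.prob_compl N.prob_compl)
qed

section \<open>The embedded jump chain\<close>

lemma weighted_norm_sum_perturb_le:
  fixes g h :: "'b \<Rightarrow> 'c::real_normed_vector" and w :: "'b \<Rightarrow> real"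
  assumes fin: "finite {e\<in>A. g e \<noteq> 0}" "finite D" and D: "D \<subseteq> A"
    and w: "\<And>e. e \<in> A \<Longrightarrow> 0 \<le> w e"
    and same: "\<And>e. e \<in> A - D \<Longrightarrow> h e = g e"
    and step: "\<And>e. e \<in> D \<Longrightarrow> norm (h e) \<le> norm (g e) + 1"
  shows "finite {e\<in>A. h e \<noteq> 0}"
    and "(\<Sum>e\<in>{e\<in>A. h e \<noteq> 0}. w e * norm (h e)) \<le> (\<Sum>e\<in>{e\<in>A. g e \<noteq> 0}. w e * norm (g e)) + (\<Sum>e\<in>D. w e)"
proof -
  define T where "T = {e\<in>A. g e \<noteq> 0} \<union> D"
  have T: "finite T" "{e\<in>A. h e \<noteq> 0} \<subseteq> T" "{e\<in>A. g e \<noteq> 0} \<subseteq> T" "D \<subseteq> T" "T \<subseteq> A"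
    using fin same D by (auto simp: T_def)
  then show "finite {e\<in>A. h e \<noteq> 0}" by (meson finite_subset)
  have "(\<Sum>e\<in>{e\<in>A. h e \<noteq> 0}. w e * norm (h e)) = (\<Sum>e\<in>T. w e * norm (h e))"
    using T by (intro sum.mono_neutral_left) auto
  also have "\<dots> \<le> (\<Sum>e\<in>T. w e * norm (g e) + (if e \<in> D then w e else 0))"
  proof (rule sum_mono)
    fix e assume "e \<in> T"
    then have "e \<in> A" using D by (auto simp: T_def)
    show "w e * norm (h e) \<le> w e * norm (g e) + (if e \<in> D then w e else 0)"
      using mult_left_mono[OF step w[OF \<open>e \<in> A\<close>]] same[of e] \<open>e \<in> A\<close>
      by (auto simp: algebra_simps)
  qed
  also have "\<dots> = (\<Sum>e\<in>T. w e * norm (g e)) + (\<Sum>e\<in>D. w e)"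
    using T by (simp add: sum.distrib sum.If_cases Int_absorb1)
  also have "(\<Sum>e\<in>T. w e * norm (g e)) = (\<Sum>e\<in>{e\<in>A. g e \<noteq> 0}. w e * norm (g e))"
    using T D by (intro sum.mono_neutral_right) auto
  finally show "(\<Sum>e\<in>{e\<in>A. h e \<noteq> 0}. w e * norm (h e)) \<le> (\<Sum>e\<in>{e\<in>A. g e \<noteq> 0}. w e * norm (g e)) + (\<Sum>e\<in>D. w e)" .
qed

locale ips =
  fixes V :: "'a::{real_inner,complete_space} set"
    and E :: "'a set set" and k :: "'a set \<Rightarrow> real" and m :: "'a \<Rightarrow> real"
    and V0 :: "'a set" and f :: "'a cfg"
  assumes V: "V \<noteq> {}"
    and E: "E \<subseteq> {{x, y} | x y. x \<in> V \<and> y \<in> V \<and> x \<noteq> y}"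
    and k: "\<forall>e\<in>E. 0 \<le> k e"
    and m: "\<forall>x\<in>V. 0 < m x"
    and deg: "\<forall>x\<in>V. finite (nbrs E x)" "bdd_above ((\<lambda>x. card (nbrs E x)) ` V)"
    and Mfin: "bdd_above ((\<lambda>x. 1 / m x) ` V)" "bdd_above (k ` E)"
    and f: "f \<in> F0 V E"
begin

abbreviation Md :: real where
  "Md \<equiv> MM V E k m * real (dd V E)"

lemma inverse_mass_le_MM: "x \<in> V \<Longrightarrow> 1 / m x \<le> MM V E k m"
  unfolding MM_def using Mfin by (intro cSup_upper) (auto simp: bdd_above_Un)

lemma conductance_le_MM: "e \<in> E \<Longrightarrow> k e \<le> MM V E k m"
  unfolding MM_def using Mfin by (intro cSup_upper) (auto simp: bdd_above_Un)

lemma MM_pos: "0 < MM V E k m"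
proof -
  obtain x where "x \<in> V" using V by blast
  then have "0 < 1 / m x" using m by auto
  also have "\<dots> \<le> MM V E k m" by (rule inverse_mass_le_MM) fact
  finally show ?thesis .
qed

lemma card_nbrs_le_dd: "x \<in> V \<Longrightarrow> card (nbrs E x) \<le> dd V E"
  unfolding dd_def using deg by (intro le_trans[OF cSup_upper max.cobounded1]) auto

lemma Md_pos: "0 < Md"
  using MM_pos by (simp add: dd_def)

lemma incident_edges_subset: "{e\<in>E. x \<in> e} \<subseteq> (\<lambda>y. {x, y}) ` nbrs E x"
proof
  fix e assume "e \<in> {e\<in>E. x \<in> e}"
  then obtain a b where e: "e = {a, b}" "e \<in> E" "x \<in> e" using E by blast
  then consider "x = a" | "x = b" by auto
  then show "e \<in> (\<lambda>y. {x, y}) ` nbrs E x"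
    by cases (use e in \<open>auto simp: nbrs_def insert_commute intro!: image_eqI[of _ _ a]\<close>)
qed

lemma incident_edges_finite_card_le:
  assumes x: "x \<in> V"
  shows "finite {e\<in>E. x \<in> e}" "card {e\<in>E. x \<in> e} \<le> dd V E"
proof -
  have fin: "finite ((\<lambda>y. {x, y}) ` nbrs E x)" using deg x by auto
  then show "finite {e\<in>E. x \<in> e}" using incident_edges_subset by (rule finite_subset[rotated])
  have "card {e\<in>E. x \<in> e} \<le> card ((\<lambda>y. {x, y}) ` nbrs E x)"
    by (rule card_mono[OF fin incident_edges_subset])
  also have "\<dots> \<le> card (nbrs E x)" by (rule card_image_le) (use deg x in auto)
  also have "\<dots> \<le> dd V E" by (rule card_nbrs_le_dd[OF x])
  finally show "card {e\<in>E. x \<in> e} \<le> dd V E" .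
qed

definition finite_cfg :: "'a cfg \<Rightarrow> bool" where
  "finite_cfg g \<longleftrightarrow> finite {x\<in>V. fst g x \<noteq> 0} \<and> finite {e\<in>E. snd g e \<noteq> 0}"

lemma finite_cfg_f: "finite_cfg f"
  using f by (auto simp: finite_cfg_def F0_def intro: finite_subset[rotated])

lemma fst_node_step [simp]: "fst (node_step E g x) = fst g"
  by (simp add: node_step_def)

lemma snd_edge_step [simp]: "snd (edge_step V0 g e) = snd g"
  by (simp add: edge_step_def)

lemma node_step_finite_cfg_norm1_le:
  assumes g: "finite_cfg g" and x: "x \<in> V"
  shows "finite_cfg (node_step E g x)" "norm1 V E k m (node_step E g x) \<le> norm1 V E k m g + Md"
proof -
  let ?h = "node_step E g x"
  let ?D = "{e\<in>E. x \<in> e}"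
  have step: "norm (snd ?h e) \<le> norm (snd g e) + 1" for e
  proof -
    have "norm (sgn (fst g x) *\<^sub>R ue (other e x) x) \<le> 1"
      by (simp add: ue_def abs_sgn_eq)
    then show ?thesis
      using norm_triangle_ineq[of "snd g e" "sgn (fst g x) *\<^sub>R ue (other e x) x"]
      by (auto simp: node_step_def)
  qed
  have fin: "finite {e\<in>E. snd g e \<noteq> 0}" "finite ?D"
    using g incident_edges_finite_card_le[OF x] by (auto simp: finite_cfg_def)
  have same: "snd ?h e = snd g e" if "e \<in> E - ?D" for e
    using that by (simp add: node_step_def)
  have D_E: "?D \<subseteq> E" by auto
  have k_nonneg: "0 \<le> k e" if "e \<in> E" for e
    using k that by auto
  note perturb = weighted_norm_sum_perturb_le[where w=k, OF fin D_E k_nonneg same step]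
  show "finite_cfg ?h"
    using g perturb(1) by (simp add: finite_cfg_def)
  have "(\<Sum>e\<in>?D. k e) \<le> real (card ?D) * MM V E k m"
    by (rule sum_bounded_above) (auto intro: conductance_le_MM)
  also have "\<dots> \<le> Md"
    using incident_edges_finite_card_le[OF x] MM_pos by (simp add: mult.commute)
  finally show "norm1 V E k m ?h \<le> norm1 V E k m g + Md"
    using perturb(2) by (simp add: norm1_def)
qed

lemma edge_step_finite_cfg_norm1_le:
  assumes g: "finite_cfg g" and e: "e \<in> E"
  shows "finite_cfg (edge_step V0 g e)" "norm1 V E k m (edge_step V0 g e) \<le> norm1 V E k m g + Md"
proof -
  let ?h = "edge_step V0 g e"
  have e_V: "e \<subseteq> V" "finite e" "card e \<le> 2"
    using e E by (auto simp: card_insert_if)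
  have step: "norm (fst ?h z) \<le> norm (fst g z) + 1" for z
  proof -
    have "\<bar>sgn (snd g e \<bullet> ue z (other e z))\<bar> \<le> 1" by (simp add: abs_sgn_eq)
    then have "\<bar>fst g z + sgn (snd g e \<bullet> ue z (other e z))\<bar> \<le> \<bar>fst g z\<bar> + 1"
      using abs_triangle_ineq[of "fst g z" "sgn (snd g e \<bullet> ue z (other e z))"] by linarith
    then show ?thesis by (auto simp: edge_step_def)
  qed
  have fin: "finite {z\<in>V. fst g z \<noteq> 0}" "finite e"
    using g e_V by (auto simp: finite_cfg_def)
  have same: "fst ?h z = fst g z" if "z \<in> V - e" for z
    using that by (simp add: edge_step_def)
  have inv_m: "0 \<le> 1 / m z" if "z \<in> V" for z
    using m that by auto
  note perturb = weighted_norm_sum_perturb_le[where w="\<lambda>z. 1 / m z", OF fin e_V(1) inv_m same step]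
  show "finite_cfg ?h"
    using g perturb(1) by (simp add: finite_cfg_def)
  have "(\<Sum>z\<in>e. 1 / m z) \<le> real (card e) * MM V E k m"
    by (rule sum_bounded_above) (use e_V in \<open>auto intro: inverse_mass_le_MM\<close>)
  also have "\<dots> \<le> Md"
    using e_V MM_pos by (simp add: mult.commute dd_def)
  finally show "norm1 V E k m ?h \<le> norm1 V E k m g + Md"
    using perturb(2) by (simp add: norm1_def)
qed

definition successors :: "'a cfg \<Rightarrow> 'a cfg set" where
  "successors g = insert g (node_step E g ` {x\<in>V. fst g x \<noteq> 0} \<union> edge_step V0 g ` {e\<in>E. snd g e \<noteq> 0})"

lemma finite_successors: "finite_cfg g \<Longrightarrow> finite (successors g)"
  unfolding successors_def finite_cfg_def by auto

lemma successor_finite_cfg_norm1_le: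
  assumes g: "finite_cfg g" and h: "h \<in> successors g"
  shows "finite_cfg h" "norm1 V E k m h \<le> norm1 V E k m g + Md"
proof -
  from h consider "h = g" | x where "x \<in> V" "h = node_step E g x"
    | e where "e \<in> E" "h = edge_step V0 g e" unfolding successors_def by auto
  then have "finite_cfg h \<and> norm1 V E k m h \<le> norm1 V E k m g + Md"
    by cases (use g Md_pos node_step_finite_cfg_norm1_le edge_step_finite_cfg_norm1_le in auto)
  then show "finite_cfg h" "norm1 V E k m h \<le> norm1 V E k m g + Md" by auto
qed

lemma qrate_le_norm1:
  assumes g: "finite_cfg g"
  shows "qrate V E k m V0 g \<le> norm1 V E k m g"
proof -
  have fin: "finite {x\<in>V. fst g x \<noteq> 0}" "finite {e\<in>E. snd g e \<noteq> 0}"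
    using g by (auto simp: finite_cfg_def)
  have "(\<Sum>x\<in>{x\<in>V. fst g x \<noteq> 0 \<and> node_step E g x \<noteq> g}. \<bar>fst g x\<bar> / m x)
      \<le> (\<Sum>x\<in>{x\<in>V. fst g x \<noteq> 0}. \<bar>fst g x\<bar> / m x)"
    using m by (intro sum_mono2[OF fin(1)]) auto
  moreover have "(\<Sum>e\<in>{e\<in>E. snd g e \<noteq> 0 \<and> edge_step V0 g e \<noteq> g}. k e * norm (snd g e))
      \<le> (\<Sum>e\<in>{e\<in>E. snd g e \<noteq> 0}. k e * norm (snd g e))"
    using k by (intro sum_mono2[OF fin(2)]) auto
  ultimately show ?thesis unfolding qrate_def norm1_def by linarith
qed

lemma qrate_nonneg: "0 \<le> qrate V E k m V0 g"
  unfolding qrate_def using m k by (intro add_nonneg_nonneg sum_nonneg) auto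

lemma jprob_nonneg: "0 \<le> jprob V E k m V0 g h"
proof -
  have "0 \<le> Qrate V E k m V0 g h"
    unfolding Qrate_def using m k by (intro add_nonneg_nonneg sum_nonneg) auto
  then show ?thesis unfolding jprob_def using qrate_nonneg by auto
qed

lemma sum_jprob_successors:
  assumes g: "finite_cfg g"
  shows "(\<Sum>h\<in>successors g. jprob V E k m V0 g h) = 1"
proof (cases "qrate V E k m V0 g = 0")
  case True
  then show ?thesis
    using finite_successors[OF g] by (simp add: jprob_def successors_def sum.If_cases)
next
  case False
  define A where "A = {x\<in>V. fst g x \<noteq> 0 \<and> node_step E g x \<noteq> g}"
  define B where "B = {e\<in>E. snd g e \<noteq> 0 \<and> edge_step V0 g e \<noteq> g}"
  define T where "T = successors g - {g}"
  have fin: "finite T" "finite A" "finite B"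
    using g finite_successors[OF g]
    by (auto simp: finite_cfg_def A_def B_def T_def intro: finite_subset[rotated])
  \<comment> \<open>Every event that changes the state leads to exactly one successor in T.\<close>
  have "(\<Sum>h\<in>T. Qrate V E k m V0 g h) =
      (\<Sum>h\<in>T. \<Sum>x\<in>{x\<in>A. node_step E g x = h}. \<bar>fst g x\<bar> / m x)
    + (\<Sum>h\<in>T. \<Sum>e\<in>{e\<in>B. edge_step V0 g e = h}. k e * norm (snd g e))"
    unfolding sum.distrib[symmetric] Qrate_def
    by (intro sum.cong refl arg_cong2[where f="(+)"]) (auto simp: A_def B_def T_def intro!: sum.cong)
  also have "\<dots> = (\<Sum>x\<in>A. \<bar>fst g x\<bar> / m x) + (\<Sum>e\<in>B. k e * norm (snd g e))"
    using fin by (intro arg_cong2[where f="(+)"] sum.group) (auto simp: A_def B_def T_def successors_def)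
  also have "\<dots> = qrate V E k m V0 g"
    by (simp add: qrate_def A_def B_def)
  finally have "(\<Sum>h\<in>T. Qrate V E k m V0 g h) = qrate V E k m V0 g" .
  moreover have "(\<Sum>h\<in>successors g. jprob V E k m V0 g h) = (\<Sum>h\<in>T. Qrate V E k m V0 g h) / qrate V E k m V0 g"
    using finite_successors[OF g] False
    by (subst sum.mono_neutral_right[of _ T]) (auto simp: T_def jprob_def sum_divide_distrib)
  ultimately show ?thesis using False by simp
qed

fun paths :: "nat \<Rightarrow> (nat \<Rightarrow> 'a cfg) set" where
  "paths 0 = {\<lambda>_. f}"
| "paths (Suc n) = (\<lambda>(g, h). g(Suc n := h)) ` (SIGMA g:paths n. successors (g n))"

lemma mem_pathsD:
  assumes "g \<in> paths n"
  shows "g 0 = f" "\<And>j. n < j \<Longrightarrow> g j = f" "\<And>j. j \<in> {1..n} \<Longrightarrow> g j \<in> successors (g (j - 1))"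
proof -
  have "g 0 = f \<and> (\<forall>j>n. g j = f) \<and> (\<forall>j\<in>{1..n}. g j \<in> successors (g (j - 1)))"
    using assms
  proof (induction n arbitrary: g)
    case (Suc n)
    then obtain g0 h where g: "g = g0(Suc n := h)" "g0 \<in> paths n" "h \<in> successors (g0 n)"
      by auto
    have IH: "g0 0 = f" "\<forall>j>n. g0 j = f" "\<forall>j\<in>{1..n}. g0 j \<in> successors (g0 (j - 1))"
      using Suc.IH[OF g(2)] by auto
    have "g j \<in> successors (g (j - 1))" if "j \<in> {1..Suc n}" for j
    proof -
      from that consider "j = Suc n" | "j \<in> {1..n}" by fastforce
      then show ?thesis
      proof cases
        case 2
        then have "g j = g0 j" "g (j - 1) = g0 (j - 1)" using g(1) by auto
        with 2 IH(3) show ?thesis by simp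
      qed (use g in simp)
    qed
    then show ?case using IH g by simp
  qed simp
  then show "g 0 = f" "\<And>j. n < j \<Longrightarrow> g j = f" "\<And>j. j \<in> {1..n} \<Longrightarrow> g j \<in> successors (g (j - 1))"
    by auto
qed

lemma paths_finite_cfg_norm1_le:
  assumes g: "g \<in> paths n" and j: "j \<le> n"
  shows "finite_cfg (g j)" "norm1 V E k m (g j) \<le> norm1 V E k m f + Md * j"
proof -
  have "finite_cfg (g j) \<and> norm1 V E k m (g j) \<le> norm1 V E k m f + Md * j"
    using j
  proof (induction j)
    case 0
    then show ?case using mem_pathsD(1)[OF g] finite_cfg_f by simp
  next
    case (Suc j)
    then have "g (Suc j) \<in> successors (g j)"
      using mem_pathsD(3)[OF g, of "Suc j"] by simp
    with Suc show ?case
      using successor_finite_cfg_norm1_le[of "g j" "g (Suc j)"] by (auto simp: algebra_simps)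
  qed
  then show "finite_cfg (g j)" "norm1 V E k m (g j) \<le> norm1 V E k m f + Md * j" by auto
qed

lemma finite_paths: "finite (paths n)"
proof (induction n)
  case (Suc n)
  have "finite (SIGMA g:paths n. successors (g n))"
    using Suc paths_finite_cfg_norm1_le(1)[of _ n n] by (intro finite_SigmaI finite_successors) auto
  then show ?case by simp
qed simp

lemma sum_paths_jprob: "(\<Sum>g\<in>paths n. \<Prod>j\<in>{1..n}. jprob V E k m V0 (g (j - 1)) (g j)) = 1"
proof (induction n)
  case (Suc n)
  let ?ext = "\<lambda>(g :: nat \<Rightarrow> 'a cfg, h). g(Suc n := h)"
  let ?w = "\<lambda>g. \<Prod>j\<in>{1..n}. jprob V E k m V0 (g (j - 1)) (g j)"
  have inj: "inj_on ?ext (SIGMA g:paths n. successors (g n))"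
  proof (rule inj_onI)
    fix p p' assume p: "p \<in> (SIGMA g:paths n. successors (g n))" "p' \<in> (SIGMA g:paths n. successors (g n))"
      and eq: "?ext p = ?ext p'"
    obtain g h g' h' where gh: "p = (g, h)" "p' = (g', h')" by (cases p, cases p') blast
    with p have g: "g \<in> paths n" "g' \<in> paths n" by auto
    have "g j = g' j" for j
      using fun_cong[OF eq, of j] mem_pathsD(2)[OF g(1)] mem_pathsD(2)[OF g(2)]
      by (cases "j = Suc n") (auto simp: gh)
    then show "p = p'" using fun_cong[OF eq, of "Suc n"] by (auto simp: gh)
  qed
  have ext_weight: "(\<Prod>j\<in>{1..Suc n}. jprob V E k m V0 ((g(Suc n := h)) (j - 1)) ((g(Suc n := h)) j))
      = ?w g * jprob V E k m V0 (g n) h" for g h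
  proof -
    have "(\<Prod>j\<in>{1..n}. jprob V E k m V0 ((g(Suc n := h)) (j - 1)) ((g(Suc n := h)) j)) = ?w g"
      by (intro prod.cong) auto
    then show ?thesis by (simp add: prod.cl_ivl_Suc)
  qed
  have fin: "\<forall>g\<in>paths n. finite (successors (g n))"
    using paths_finite_cfg_norm1_le(1)[of _ n n] finite_successors by auto
  have "(\<Sum>g\<in>paths (Suc n). \<Prod>j\<in>{1..Suc n}. jprob V E k m V0 (g (j - 1)) (g j))
      = (\<Sum>g\<in>paths n. \<Sum>h\<in>successors (g n). ?w g * jprob V E k m V0 (g n) h)"
    unfolding sum.Sigma[OF finite_paths fin] paths.simps sum.reindex[OF inj]
    by (simp only: case_prod_unfold comp_def ext_weight)
  also have "\<dots> = (\<Sum>g\<in>paths n. ?w g)"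
    using paths_finite_cfg_norm1_le(1)[of _ n n]
    by (intro sum.cong refl) (simp add: sum_distrib_left[symmetric] sum_jprob_successors)
  finally show ?case using Suc.IH by simp
qed simp

lemma qrate_along_path_le:
  assumes g: "g \<in> paths n" and j: "j \<in> {1..n}" and r: "norm1 V E k m f \<le> Md * r"
  shows "qrate V E k m V0 (g (j - 1)) \<le> real (j + r - 1) * Md"
proof -
  have "qrate V E k m V0 (g (j - 1)) \<le> norm1 V E k m (g (j - 1))"
    using paths_finite_cfg_norm1_le(1)[OF g, of "j - 1"] j by (intro qrate_le_norm1) auto
  also have "\<dots> \<le> norm1 V E k m f + Md * real (j - 1)"
    using paths_finite_cfg_norm1_le(2)[OF g, of "j - 1"] j by auto
  also have "\<dots> \<le> real (j + r - 1) * Md"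
    using r j by (simp add: algebra_simps of_nat_diff)
  finally show ?thesis .
qed

end

section \<open>Comparison with the Yule process\<close>

locale ips_yule = ips +
  fixes r :: nat
    and P :: "'w measure" and H :: "nat \<Rightarrow> 'w \<Rightarrow> 'a cfg" and X :: "nat \<Rightarrow> 'w \<Rightarrow> ennreal"
    and N :: "'v measure" and Y :: "nat \<Rightarrow> 'v \<Rightarrow> ennreal"
  assumes IPS: "IPS_realisation V E k m V0 f P H X"
    and Yule: "Yule_times Md r N Y"
    and r: "norm1 V E k m f \<le> Md * r"
begin

lemma prob_space_P: "prob_space P"
  using IPS by (simp add: IPS_realisation_def)

lemma prob_space_N: "prob_space N"
  using Yule by (simp add: Yule_times_def)

lemma X_measurable: "X j \<in> borel_measurable P"
  using IPS by (simp add: IPS_realisation_def)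

lemma Y_measurable: "1 \<le> j \<Longrightarrow> Y j \<in> borel_measurable N"
  using Yule by (auto simp: Yule_times_def prob_space.indep_vars_def[OF prob_space_N])

lemma IPS_law:
  "g 0 = f \<Longrightarrow> (\<forall>j\<in>{1..n}. 0 \<le> t j) \<Longrightarrow>
    measure P {\<omega>\<in>space P. \<forall>j\<in>{1..n}. H j \<omega> = g j \<and> ennreal (t j) < X j \<omega>}
    = (\<Prod>j\<in>{1..n}. jprob V E k m V0 (g (j - 1)) (g j) * exp (- qrate V E k m V0 (g (j - 1)) * t j))"
  using IPS unfolding IPS_realisation_def by blast

lemma Yule_tail:
  "1 \<le> j \<Longrightarrow> 0 \<le> t \<Longrightarrow> measure N {\<omega>\<in>space N. ennreal t < Y j \<omega>} = exp (- (real (j + r - 1) * Md) * t)"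
  using Yule unfolding Yule_times_def by blast

definition follows_path :: "nat \<Rightarrow> (nat \<Rightarrow> 'a cfg) \<Rightarrow> 'w \<Rightarrow> bool" where
  "follows_path n g \<omega> \<longleftrightarrow> (\<forall>j\<in>{1..n}. H j \<omega> = g j)"

lemma follows_path_measurable: "{\<omega>\<in>space P. follows_path n g \<omega>} \<in> sets P"
proof -
  have "{\<omega>\<in>space P. H j \<omega> = g j} \<in> sets P" for j
    using IPS unfolding IPS_realisation_def by blast
  then show ?thesis
    unfolding follows_path_def by (intro sets.sets_Collect_finite_All) auto
qed

text \<open>Conditionally on following the path g, the holding times are independent exponentials
  with rates qrate (g (j - 1)), and these are dominated by the Yule rates.\<close>
lemma measure_upper_set_on_path:
  fixes S :: "(nat \<Rightarrow> ennreal) set"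
  assumes g: "g \<in> paths n" and n: "1 \<le> n"
    and S: "S \<in> sets (PiM {1..n} (\<lambda>_. borel))"
    and S_up: "\<And>x y. x \<in> S \<Longrightarrow> y \<in> space (PiM {1..n} (\<lambda>_. borel)) \<Longrightarrow> (\<forall>j\<in>{1..n}. x j \<le> y j) \<Longrightarrow> y \<in> S"
  shows "(\<Prod>j\<in>{1..n}. jprob V E k m V0 (g (j - 1)) (g j)) * measure N {\<omega>\<in>space N. (\<lambda>j\<in>{1..n}. Y j \<omega>) \<in> S}
    \<le> measure P {\<omega>\<in>space P. follows_path n g \<omega> \<and> (\<lambda>j\<in>{1..n}. X j \<omega>) \<in> S}"
proof (rule measure_upper_set_le_of_exp_tails[OF prob_space_P prob_space_N _ _ X_measurable
      follows_path_measurable _ _ _ _ _ S S_up])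
  show "measure P {\<omega>\<in>space P. follows_path n g \<omega> \<and> (\<forall>j\<in>{1..n}. ennreal (t j) < X j \<omega>)}
      = (\<Prod>j\<in>{1..n}. jprob V E k m V0 (g (j - 1)) (g j)) * (\<Prod>j\<in>{1..n}. exp (- qrate V E k m V0 (g (j - 1)) * t j))"
    if "\<forall>j\<in>{1..n}. 0 \<le> t j" for t
    unfolding follows_path_def prod.distrib[symmetric] ball_conj_distrib[symmetric]
    by (rule IPS_law[of g n t, OF mem_pathsD(1)[OF g] that])
  show "0 \<le> qrate V E k m V0 (g (j - 1)) \<and> qrate V E k m V0 (g (j - 1)) \<le> real (j + r - 1) * Md"
    if "j \<in> {1..n}" for j
    using qrate_nonneg qrate_along_path_le[OF g that r] by simp
  show "prob_space.indep_vars N (\<lambda>_. borel) Y {1..n}"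
    using Yule prob_space.indep_vars_subset[OF prob_space_N, of _ Y "{1..}" "{1..n}"]
    by (auto simp: Yule_times_def)
  show "measure N {\<omega>\<in>space N. ennreal t < Y j \<omega>} = exp (- (real (j + r - 1) * Md) * t)"
    if "j \<in> {1..n}" "0 \<le> t" for j t
    using Yule_tail that by simp
  show "0 \<le> (\<Prod>j\<in>{1..n}. jprob V E k m V0 (g (j - 1)) (g j))"
    by (intro prod_nonneg) (simp add: jprob_nonneg)
qed (use n in auto)

lemma measure_upper_set_Yule_le_IPS:
  fixes S :: "(nat \<Rightarrow> ennreal) set"
  assumes n: "1 \<le> n"
    and S: "S \<in> sets (PiM {1..n} (\<lambda>_. borel))"
    and S_up: "\<And>x y. x \<in> S \<Longrightarrow> y \<in> space (PiM {1..n} (\<lambda>_. borel)) \<Longrightarrow> (\<forall>j\<in>{1..n}. x j \<le> y j) \<Longrightarrow> y \<in> S"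
  shows "measure N {\<omega>\<in>space N. (\<lambda>j\<in>{1..n}. Y j \<omega>) \<in> S} \<le> measure P {\<omega>\<in>space P. (\<lambda>j\<in>{1..n}. X j \<omega>) \<in> S}"
proof -
  interpret P: prob_space P by (rule prob_space_P)
  define c where "c g = (\<Prod>j\<in>{1..n}. jprob V E k m V0 (g (j - 1)) (g j))" for g
  define A where "A g = {\<omega>\<in>space P. follows_path n g \<omega> \<and> (\<lambda>j\<in>{1..n}. X j \<omega>) \<in> S}" for g
  define p_Y where "p_Y = measure N {\<omega>\<in>space N. (\<lambda>j\<in>{1..n}. Y j \<omega>) \<in> S}"
  have X_S: "(\<lambda>\<omega>. \<lambda>j\<in>{1..n}. X j \<omega>) -` S \<inter> space P \<in> sets P"
    using measurable_sets[OF measurable_restrict[OF X_measurable] S] .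
  have A_meas: "A g \<in> sets P" for g
  proof -
    have "A g = {\<omega>\<in>space P. follows_path n g \<omega>} \<inter> ((\<lambda>\<omega>. \<lambda>j\<in>{1..n}. X j \<omega>) -` S \<inter> space P)"
      by (auto simp: A_def)
    then show ?thesis using follows_path_measurable X_S by auto
  qed
  have disj: "disjoint_family_on A (paths n)"
    unfolding disjoint_family_on_def
  proof (intro ballI impI)
    fix g g' assume g: "g \<in> paths n" "g' \<in> paths n" "g \<noteq> g'"
    have "\<exists>j\<in>{1..n}. g j \<noteq> g' j"
    proof (rule ccontr)
      assume "\<not> ?thesis"
      then have "g j = g' j" for j
        using mem_pathsD(1,2)[OF g(1)] mem_pathsD(1,2)[OF g(2)]
        by (cases "j = 0"; cases "n < j") auto
      with g(3) show False by auto
    qed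
    then show "A g \<inter> A g' = {}" by (auto simp: A_def follows_path_def)
  qed
  have "p_Y = (\<Sum>g\<in>paths n. c g * p_Y)"
    using sum_paths_jprob[of n] by (simp add: c_def sum_distrib_right[symmetric])
  also have "\<dots> \<le> (\<Sum>g\<in>paths n. measure P (A g))"
    unfolding c_def p_Y_def A_def by (intro sum_mono) (rule measure_upper_set_on_path[OF _ n S S_up])
  also have "\<dots> = measure P (\<Union>g\<in>paths n. A g)"
    using finite_paths A_meas disj by (intro P.finite_measure_finite_Union[symmetric]) auto
  also have "\<dots> \<le> measure P {\<omega>\<in>space P. (\<lambda>j\<in>{1..n}. X j \<omega>) \<in> S}"
    using X_S by (intro P.finite_measure_mono) (auto simp: A_def vimage_def Int_def conj_commute)
  finally show ?thesis by (simp add: p_Y_def)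
qed

lemma sdom_monotone_functional:
  assumes n: "1 \<le> n"
    and \<phi>: "\<phi> \<in> borel_measurable (PiM {1..n} (\<lambda>_. borel :: ennreal measure))"
    and mono: "\<And>x y. \<forall>j\<in>{1..n}. x j \<le> y j \<Longrightarrow> \<phi> x \<le> \<phi> y"
  shows "sdom P (\<lambda>\<omega>. \<phi> (\<lambda>j\<in>{1..n}. X j \<omega>)) N (\<lambda>\<omega>. \<phi> (\<lambda>j\<in>{1..n}. Y j \<omega>))"
  unfolding sdom_def
proof (intro allI impI)
  fix t :: real
  define S where "S = {x\<in>space (PiM {1..n} (\<lambda>_. borel :: ennreal measure)). ennreal t < \<phi> x}"
  have S: "S \<in> sets (PiM {1..n} (\<lambda>_. borel))"
    unfolding S_def using \<phi> by measurable
  have "measure N {\<omega>\<in>space N. (\<lambda>j\<in>{1..n}. Y j \<omega>) \<in> S} \<le> measure P {\<omega>\<in>space P. (\<lambda>j\<in>{1..n}. X j \<omega>) \<in> S}"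
  proof (rule measure_upper_set_Yule_le_IPS[OF n S])
    fix x y assume "x \<in> S" "y \<in> space (PiM {1..n} (\<lambda>_. borel))" "\<forall>j\<in>{1..n}. x j \<le> y j"
    then show "y \<in> S" using mono[of x y] by (auto simp: S_def)
  qed
  then show "measure N {\<omega>\<in>space N. ennreal t < \<phi> (\<lambda>j\<in>{1..n}. Y j \<omega>)}
      \<le> measure P {\<omega>\<in>space P. ennreal t < \<phi> (\<lambda>j\<in>{1..n}. X j \<omega>)}"
    by (simp add: S_def space_PiM)
qed

lemma sdom_holding_time: "1 \<le> n \<Longrightarrow> sdom P (X n) N (Y n)"
  using sdom_monotone_functional[of n "\<lambda>x. x n"] by simp

lemma sdom_jtime: "sdom P (jtime X n) N (jtime Y n)"
proof (cases "n = 0")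
  case True
  then show ?thesis by (simp add: sdom_def jtime_def)
next
  case False
  have "(\<lambda>x. \<Sum>j\<in>{1..n}. x j) \<in> borel_measurable (PiM {1..n} (\<lambda>_. borel :: ennreal measure))"
    by measurable
  then have "sdom P (\<lambda>\<omega>. \<Sum>j\<in>{1..n}. (\<lambda>j\<in>{1..n}. X j \<omega>) j) N (\<lambda>\<omega>. \<Sum>j\<in>{1..n}. (\<lambda>j\<in>{1..n}. Y j \<omega>) j)"
    using False by (intro sdom_monotone_functional) (auto intro: sum_mono)
  then show ?thesis by (simp add: jtime_def[abs_def])
qed

lemma sdom_jcount: "0 \<le> t \<Longrightarrow> sdom N (jcount Y t) P (jcount X t)"
proof (rule sdom_jcount_of_sdom_jtime[OF prob_space_P prob_space_N _ _ sdom_jtime])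
  show "jtime X n \<in> borel_measurable P" for n
    unfolding jtime_def[abs_def] using X_measurable by (intro borel_measurable_sum) simp
  show "jtime Y n \<in> borel_measurable N" for n
    unfolding jtime_def[abs_def] using Y_measurable by (intro borel_measurable_sum) simp
qed

end

theorem corollary2p1:
  fixes V :: "'a::{real_inner,complete_space} set"
    and E :: "'a set set" and k :: "'a set \<Rightarrow> real" and m :: "'a \<Rightarrow> real"
    and V0 :: "'a set" and f :: "'a cfg" and r :: nat
    and P :: "'w measure" and H :: "nat \<Rightarrow> 'w \<Rightarrow> 'a cfg" and X :: "nat \<Rightarrow> 'w \<Rightarrow> ennreal"
    and N :: "'v measure" and Y :: "nat \<Rightarrow> 'v \<Rightarrow> ennreal"
  assumes V: "V \<noteq> {}" "countable V"
    and E: "E \<subseteq> {{x, y} | x y. x \<in> V \<and> y \<in> V \<and> x \<noteq> y}"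
    and k: "\<forall>e\<in>E. 0 \<le> k e"
    and m: "\<forall>x\<in>V. 0 < m x"
    and deg: "\<forall>x\<in>V. finite (nbrs E x)" "bdd_above ((\<lambda>x. card (nbrs E x)) ` V)"
    and Mfin: "bdd_above ((\<lambda>x. 1 / m x) ` V)" "bdd_above (k ` E)"
    and V0: "V0 \<subseteq> V"
    and f: "f \<in> F0 V E"
    and r: "real r \<ge> norm1 V E k m f / (MM V E k m * real (dd V E))"
    and IPS: "IPS_realisation V E k m V0 f P H X"
    and Yule: "Yule_times (MM V E k m * real (dd V E)) r N Y"
  shows "(\<forall>n\<ge>1. sdom P (X n) N (Y n))
       \<and> (\<forall>n. sdom P (jtime X n) N (jtime Y n))
       \<and> (\<forall>t\<ge>0. sdom N (jcount Y t) P (jcount X t))"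
proof -
  interpret ips V E k m V0 f
    using V E k m deg Mfin f by unfold_locales auto
  have "norm1 V E k m f \<le> Md * r"
    using r Md_pos by (simp add: pos_divide_le_eq mult.commute)
  then interpret ips_yule V E k m V0 f r P H X N Y
    using IPS Yule by unfold_locales auto
  show ?thesis using sdom_holding_time sdom_jtime sdom_jcount by auto
qed

end
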